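(* Let $n\ge1$, $k>0$ and $P\in\mathscr P_n$. Then for all $\alpha\in\mathbb C$ with $|\alpha|\le1$, all $R>r\ge k$ and all $|z|\ge1$, $$\big|B[P\circ\sigma](z)-\alpha B[P\circ\rho](z)\big|\le\frac{1}{k^n}|R^n-\alpha r^n|\,|B[z^n]|\,\max_{|z|=k}|P(z)|.$$ Equality holds for $P(z)=az^n$, $a\ne0$.
   Context: For an integer $n\ge1$, $\mathscr P_n$ denotes the set of complex polynomials of degree at most $n$. Fix complex numbers $\lambda_0,\lambda_1,\lambda_2$ such that all zeros of $U(z)=\lambda_0+n\lambda_1 z+\frac{n(n-1)}{2}\lambda_2 z^2$ lie in the half-plane $\{z\in\mathbb C:|z|\le|z-n/2|\}$. The operator $B$ (of the class $\mathcal B_n$) sends $P\in\mathscr P_n$ to $B[P](z)=\lambda_0P(z)+\lambda_1\frac{nz}{2}P'(z)+\lambda_2\left(\frac{nz}{2}\right)^2\frac{P''(z)}{2!}$. For a polynomial $P$ and a map $\rho$, $P\circ\rho$ denotes $z\mapsto P(\rho(z))$, and $B[P\circ\rho](z)$ is $B$ applied to the polynomial $P\circ\rho$, evaluated at $z$. $B[z^n]$ denotes $B$ applied to the monomial $z\mapsto z^n$, evaluated at the point $z$ under consideration; thus $|B[z^n]|=|z|^n\,|\lambda_0+\lambda_1 n^2/2+\lambda_2 n^3(n-1)/8|$. $\sigma(z)=Rz$, $\rho(z)=rz$. *)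

theory Defs
  imports "HOL-Analysis.Analysis" "HOL-Computational_Algebra.Polynomial"
begin

definition U_poly :: "nat \<Rightarrow> complex \<Rightarrow> complex \<Rightarrow> complex \<Rightarrow> complex poly" where
  "U_poly n l0 l1 l2 = [: l0, of_nat n * l1, of_nat (n * (n - 1)) / 2 * l2 :]"

definition B_admissible :: "nat \<Rightarrow> complex \<Rightarrow> complex \<Rightarrow> complex \<Rightarrow> bool" where
  "B_admissible n l0 l1 l2 \<longleftrightarrow>
     (\<forall>z. poly (U_poly n l0 l1 l2) z = 0 \<longrightarrow> cmod z \<le> cmod (z - of_nat n / 2))"

definition B_op :: "nat \<Rightarrow> complex \<Rightarrow> complex \<Rightarrow> complex \<Rightarrow> complex poly \<Rightarrow> complex \<Rightarrow> complex" where
  "B_op n l0 l1 l2 P z =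
     l0 * poly P z + l1 * (of_nat n * z / 2) * poly (pderiv P) z
     + l2 * (of_nat n * z / 2)^2 * poly (pderiv (pderiv P)) z / 2"

definition max_circle :: "complex poly \<Rightarrow> real \<Rightarrow> real" where
  "max_circle P k = (SUP z\<in>sphere 0 k. cmod (poly P z))"

end

theory Submission
  imports Defs "HOL-Complex_Analysis.Complex_Analysis"
    "HOL-Computational_Algebra.Fundamental_Theorem_Algebra"
begin

text \<open>Suppose the inequality fails at some \<open>z\<close>, and let \<open>\<mu>\<close> be the quotient of its left-hand side
  by \<open>(R\<^sup>n - \<alpha> r\<^sup>n) B[z\<^sup>n]\<close>. Then \<open>|\<mu>| > M/k\<^sup>n\<close>, where \<open>M\<close> is the maximum of \<open>|P|\<close> on
  \<open>|z| = k\<close>; by the maximum modulus principle for \<open>z\<^sup>n P(1/z)\<close>, the polynomial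
  \<open>F = P - \<mu> z\<^sup>n\<close> has degree \<open>n\<close> and all its zeros in \<open>|z| < k\<close>. Writing \<open>F\<close> as a product of
  linear factors, \<open>|F(Rz)| > |F(rz)|\<close> for \<open>|z| \<ge> 1\<close>, so \<open>G(z) = F(Rz) - \<alpha> F(rz)\<close> has all its
  zeros \<open>w\<^sub>i\<close> in the open unit disc. Now \<open>B[G](z)\<close> is \<open>\<Prod>(z - w\<^sub>i)\<close> times a symmetric
  multiaffine polynomial in \<open>u\<^sub>i = z/(z - w\<^sub>i)\<close>, all of which satisfy \<open>Re u\<^sub>i > 1/2\<close>; the
  admissibility of \<open>B\<close> says exactly that the diagonal of this polynomial has no zeros in
  \<open>Re u > 1/2\<close>, and by Laguerre's theorem on polar derivatives the polynomial itself
  has none there. Hence \<open>B[G](z) \<noteq> 0\<close>, contradicting the choice of \<open>\<mu>\<close>, which makes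
  \<open>B[G](z) = 0\<close>.\<close>

lemma norm_poly_le_on_cball:
  fixes p :: "complex poly"
  assumes "\<rho> > 0" "\<And>w. cmod w = \<rho> \<Longrightarrow> cmod (poly p w) \<le> K" "cmod v \<le> \<rho>"
  shows "cmod (poly p v) \<le> K"
  by (rule maximum_modulus_frontier[where S = "cball 0 \<rho>"])
     (use assms in \<open>auto intro!: holomorphic_intros continuous_intros\<close>)

lemma norm_poly_le_max_circle:
  assumes "cmod x = k"
  shows "cmod (poly P x) \<le> max_circle P k"
proof -
  have "compact ((\<lambda>z. cmod (poly P z)) ` sphere 0 k)"
    by (intro compact_continuous_image continuous_intros) auto
  hence "bdd_above ((\<lambda>z. cmod (poly P z)) ` sphere 0 k)"
    by (intro bounded_imp_bdd_above compact_imp_bounded)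
  thus ?thesis unfolding max_circle_def using assms by (intro cSUP_upper) auto
qed

lemma max_circle_monom:
  assumes "k \<ge> 0"
  shows "max_circle (monom a n) k = cmod a * k ^ n"
proof -
  have "sphere (0::complex) k \<noteq> {}" using assms by simp
  thus ?thesis
    unfolding max_circle_def by (simp add: poly_monom norm_mult norm_power)
qed

definition reversal :: "nat \<Rightarrow> 'a::field poly \<Rightarrow> 'a poly" where
  "reversal n P = monom 1 (n - degree P) * reflect_poly P"

lemma poly_reversal:
  assumes "degree P \<le> n" "x \<noteq> 0"
  shows "poly (reversal n P) x = x ^ n * poly P (inverse x)"
  using assms by (simp add: reversal_def poly_monom poly_reflect_poly_nz flip: power_add)

lemma poly_reversal_0:
  assumes "degree P \<le> n"
  shows "poly (reversal n P) 0 = coeff P n"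
  using assms by (cases "degree P = n") (auto simp: reversal_def poly_monom coeff_eq_0)

lemma norm_poly_reversal_le:
  fixes P :: "complex poly"
  assumes "degree P \<le> n" "k > 0" "cmod v \<le> 1 / k"
  shows "cmod (poly (reversal n P) v) \<le> max_circle P k / k ^ n"
proof (rule norm_poly_le_on_cball[OF _ _ assms(3)])
  show "1 / k > 0" using assms by simp
next
  fix w :: complex assume w: "cmod w = 1 / k"
  hence "w \<noteq> 0" using assms by auto
  hence "cmod (poly (reversal n P) w) = (1 / k) ^ n * cmod (poly P (inverse w))"
    by (simp add: poly_reversal[OF assms(1)] norm_mult norm_power w)
  also have "\<dots> \<le> (1 / k) ^ n * max_circle P k"
    using assms w by (intro mult_left_mono norm_poly_le_max_circle) (simp_all add: norm_inverse)
  finally show "cmod (poly (reversal n P) w) \<le> max_circle P k / k ^ n"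
    by (simp add: power_one_over)
qed

lemma norm_coeff_le_max_circle:
  fixes P :: "complex poly"
  assumes "degree P \<le> n" "k > 0"
  shows "cmod (coeff P n) \<le> max_circle P k / k ^ n"
  using norm_poly_reversal_le[OF assms, of 0] assms by (simp add: poly_reversal_0)

lemma norm_poly_le_max_circle_outside:
  fixes P :: "complex poly"
  assumes "degree P \<le> n" "k > 0" "cmod x \<ge> k"
  shows "cmod (poly P x) \<le> max_circle P k / k ^ n * cmod x ^ n"
proof -
  have x: "x \<noteq> 0" using assms by auto
  have "poly P x = x ^ n * poly (reversal n P) (inverse x)"
    using poly_reversal[OF assms(1), of "inverse x"] x by (simp add: power_inverse field_simps)
  also have "cmod \<dots> \<le> cmod x ^ n * (max_circle P k / k ^ n)"
    unfolding norm_mult norm_power using assms x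
    by (intro mult_left_mono norm_poly_reversal_le) (simp_all add: norm_inverse norm_divide divide_simps)
  finally show ?thesis by (simp add: mult.commute)
qed

lemma degree_diff_large_monom:
  fixes P :: "complex poly"
  assumes P: "degree P \<le> n" and k: "k > 0" and \<mu>: "cmod \<mu> > max_circle P k / k ^ n"
  shows "degree (P - smult \<mu> (monom 1 n)) = n"
proof (rule antisym)
  show "degree (P - smult \<mu> (monom 1 n)) \<le> n"
    using P by (intro degree_diff_le) (auto simp: degree_monom_eq)
  have "coeff (P - smult \<mu> (monom 1 n)) n \<noteq> 0"
    using norm_coeff_le_max_circle[OF P k] \<mu> by auto
  thus "n \<le> degree (P - smult \<mu> (monom 1 n))" by (rule le_degree)
qed

lemma zeros_diff_large_monom:
  fixes P :: "complex poly"
  assumes P: "degree P \<le> n" and k: "k > 0" and \<mu>: "cmod \<mu> > max_circle P k / k ^ n"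
    and x: "poly (P - smult \<mu> (monom 1 n)) x = 0"
  shows "cmod x < k"
proof (rule ccontr)
  assume "\<not> cmod x < k"
  hence "cmod x \<ge> k" "x \<noteq> 0" using k by auto
  have "cmod \<mu> * cmod x ^ n = cmod (poly P x)"
    using x by (simp add: poly_monom norm_mult norm_power)
  also have "\<dots> \<le> max_circle P k / k ^ n * cmod x ^ n"
    by (rule norm_poly_le_max_circle_outside[OF P k \<open>cmod x \<ge> k\<close>])
  also have "\<dots> < cmod \<mu> * cmod x ^ n"
    using \<mu> \<open>x \<noteq> 0\<close> by (intro mult_strict_right_mono) auto
  finally show False by simp
qed

fun esym2 :: "(nat \<Rightarrow> complex) \<Rightarrow> nat \<Rightarrow> complex" where
  "esym2 u 0 = 0"
| "esym2 u (Suc k) = esym2 u k + u k * (\<Sum>i<k. u i)"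

text \<open>\<open>sym_quad a b c m x\<close> is the value at \<open>(x, \<dots>, x)\<close> of the symmetric multiaffine
  polynomial \<open>a + b e\<^sub>1 + c e\<^sub>2\<close> in \<open>m\<close> variables.\<close>
definition sym_quad :: "complex \<Rightarrow> complex \<Rightarrow> complex \<Rightarrow> nat \<Rightarrow> complex \<Rightarrow> complex" where
  "sym_quad a b c m x = a + b * of_nat m * x + c * (of_nat m * (of_nat m - 1) / 2) * x\<^sup>2"

text \<open>Equivalently \<open>1/d = (1/a + 1/b)/m\<close>: the disc \<open>{w. Re (1/w) \<ge> A}\<close> is convex and
  contains \<open>0\<close>, so it contains \<open>1/d\<close> along with \<open>1/a\<close> and \<open>1/b\<close>.\<close>
lemma Re_ge_if_harmonic_mean:
  fixes a b d :: complex and A m :: real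
  assumes "Re a \<ge> A" "Re b \<ge> A" "A > 0" "m \<ge> 2" and eq: "of_real m * a * b = d * (a + b)"
  shows "Re d \<ge> A"
proof -
  have "of_real m * a * b * cnj (a + b) = d * ((a + b) * cnj (a + b))"
    using eq by simp
  hence "Re (of_real m * a * b * cnj (a + b)) = Re (d * ((a + b) * cnj (a + b)))"
    by (rule arg_cong)
  hence key: "m * ((cmod a)\<^sup>2 * Re b + (cmod b)\<^sup>2 * Re a) = Re d * (cmod (a + b))\<^sup>2"
    unfolding cmod_power2 by (simp add: algebra_simps power2_eq_square)
  have "(cmod (a + b))\<^sup>2 \<le> (cmod a + cmod b)\<^sup>2"
    by (simp add: power_mono norm_triangle_ineq)
  also have "\<dots> \<le> 2 * ((cmod a)\<^sup>2 + (cmod b)\<^sup>2)"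
    using sum_squares_ge_zero[of "cmod a - cmod b" 0] by (simp add: power2_eq_square algebra_simps)
  finally have "A * (cmod (a + b))\<^sup>2 \<le> 2 * A * ((cmod a)\<^sup>2 + (cmod b)\<^sup>2)"
    using assms(3) by (simp add: mult_left_mono)
  also have "\<dots> \<le> m * ((cmod a)\<^sup>2 * A + (cmod b)\<^sup>2 * A)"
    using assms(3,4) mult_right_mono[of 2 m "(cmod a)\<^sup>2 * A + (cmod b)\<^sup>2 * A"]
    by (simp add: algebra_simps)
  also have "\<dots> \<le> m * ((cmod a)\<^sup>2 * Re b + (cmod b)\<^sup>2 * Re a)"
    using assms by (intro mult_left_mono add_mono) auto
  finally have "A * (cmod (a + b))\<^sup>2 \<le> Re d * (cmod (a + b))\<^sup>2"
    by (simp only: key)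
  moreover have "Re (a + b) > 0" using assms by simp
  hence "(cmod (a + b))\<^sup>2 > 0" by (metis zero_less_power2 norm_eq_zero zero_complex.sel(1) less_irrefl)
  ultimately show ?thesis by simp
qed

lemma quadratic_factor:
  fixes a b c :: complex
  assumes "c \<noteq> 0"
  obtains r1 r2 where "\<And>x. a + b * x + c * x\<^sup>2 = c * (x - r1) * (x - r2)"
proof -
  define s where "s = csqrt (b\<^sup>2 - 4 * c * a)"
  have "s * s = b * b - 4 * c * a" by (simp add: s_def flip: power2_eq_square)
  with assms show ?thesis
    by (intro that[of "(- b + s) / (2 * c)" "(- b - s) / (2 * c)"])
       (simp add: field_simps power2_eq_square, algebra)
qed

lemma sym_quad_polar:
  assumes "m \<ge> 1"
  shows "of_nat m * sym_quad (a + b * u) (b + c * u) c (m - 1) x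
    = of_nat m * sym_quad a b c m x + (u - x) * (b * of_nat m + c * of_nat m * (of_nat m - 1) * x)"
  using assms by (simp add: sym_quad_def of_nat_diff field_simps power2_eq_square)

text \<open>Laguerre's theorem on polar derivatives, for polynomials of degree at most two:
  the polar derivative with pole \<open>u\<close> does not vanish on the open half-plane
  \<open>Re x > 1/2\<close> containing \<open>u\<close> and free of zeros of the polynomial.\<close>
lemma sym_quad_polar_nonzero:
  assumes m: "m \<ge> 1" and u: "Re u > 1/2" and x: "Re x > 1/2"
    and q: "\<And>y. Re y > 1/2 \<Longrightarrow> sym_quad a b c m y \<noteq> 0"
  shows "sym_quad (a + b * u) (b + c * u) c (m - 1) x \<noteq> 0"
proof
  define M :: complex where "M = of_nat m"
  define G where "G = c * (M * (M - 1) / 2)"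
  have M: "Re M = real m" "Im M = 0" "M \<noteq> 0" using m by (auto simp: M_def)
  have Q: "sym_quad a b c m y = a + b * M * y + G * y\<^sup>2" for y
    by (simp add: sym_quad_def M_def G_def)
  assume "sym_quad (a + b * u) (b + c * u) c (m - 1) x = 0"
  hence "M * sym_quad a b c m x + (u - x) * (b * M + c * M * (M - 1) * x) = 0"
    using sym_quad_polar[OF m, of a b u c x] by (simp add: M_def)
  moreover have "c * M * (M - 1) = 2 * G" by (simp add: G_def)
  ultimately have polar: "M * sym_quad a b c m x + (u - x) * (b * M + 2 * G * x) = 0"
    by simp
  have "Re (x - u) \<ge> Re x - 1/2"
  proof (cases "G = 0")
    case True
    show ?thesis
    proof (cases "b = 0")
      case True
      with polar \<open>G = 0\<close> M q[OF x] show ?thesis by simp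
    next
      case False
      define r where "r = - a / (b * M)"
      have lin: "sym_quad a b c m y = b * M * (y - r)" for y
        using False M \<open>G = 0\<close> by (simp add: Q r_def field_simps)
      have "Re r \<le> 1/2" using q[of r] by (force simp: lin)
      have "b * M * (M * (x - r) - (x - u)) = 0"
        using polar \<open>G = 0\<close> by (simp add: lin algebra_simps)
      hence "of_real (real m) * (x - r) = x - u" using False M by (simp add: M_def)
      hence "Re (x - u) = Re (of_real (real m) * (x - r))" by simp
      also have "\<dots> = real m * Re (x - r)" by simp
      also have "\<dots> \<ge> 1 * Re (x - r)"
        using m x \<open>Re r \<le> 1/2\<close> by (intro mult_right_mono) auto
      finally show ?thesis using \<open>Re r \<le> 1/2\<close> by simp
    qed
  next
    case False
    obtain r1 r2 where fac: "\<And>y. a + b * M * y + G * y\<^sup>2 = G * (y - r1) * (y - r2)"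
      using quadratic_factor[OF False] by blast
    have roots: "Re r1 \<le> 1/2" "Re r2 \<le> 1/2" using q[of r1] q[of r2] by (force simp: Q fac)+
    have "a = G * r1 * r2" "a + b * M + G = G * (1 - r1) * (1 - r2)"
      using fac[of 0] fac[of 1] by simp_all
    hence "b * M + 2 * G * x = G * ((x - r1) + (x - r2))" by algebra
    moreover have "sym_quad a b c m x = G * (x - r1) * (x - r2)" using fac[of x] by (simp add: Q)
    ultimately have "G * (M * (x - r1) * (x - r2) - (x - u) * ((x - r1) + (x - r2))) = 0"
      using polar by algebra
    hence "of_real (real m) * (x - r1) * (x - r2) = (x - u) * ((x - r1) + (x - r2))"
      using False by (simp add: M_def)
    moreover have "m \<ge> 2" using False m by (cases "m = 1") (auto simp: G_def M_def)
    ultimately show ?thesis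
      using roots x Re_ge_if_harmonic_mean[of "Re x - 1/2" "x - r1" "x - r2" "real m" "x - u"]
      by simp
  qed
  thus False using u by simp
qed

lemma poly_U_poly_eq_sym_quad:
  assumes "n \<ge> 1"
  shows "poly (U_poly n l0 l1 l2) (of_nat n * x / 2)
    = sym_quad l0 (l1 * of_nat n / 2) (l2 * of_nat n ^ 2 / 4) n x"
  using assms by (simp add: U_poly_def sym_quad_def of_nat_diff field_simps power2_eq_square)

lemma admissible_sym_quad_nonzero:
  assumes adm: "B_admissible n l0 l1 l2" and n: "n \<ge> 1" and x: "Re x > 1/2"
  shows "sym_quad l0 (l1 * of_nat n / 2) (l2 * of_nat n ^ 2 / 4) n x \<noteq> 0"
proof
  define y where "y = of_nat n * x / 2"
  assume "sym_quad l0 (l1 * of_nat n / 2) (l2 * of_nat n ^ 2 / 4) n x = 0"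
  hence "poly (U_poly n l0 l1 l2) y = 0" by (simp add: poly_U_poly_eq_sym_quad[OF n] y_def)
  hence "cmod y \<le> cmod (y - of_nat n / 2)" using adm by (simp add: B_admissible_def)
  hence "(cmod y)\<^sup>2 \<le> (cmod (y - of_nat n / 2))\<^sup>2" by (simp add: power_mono)
  hence "(Re y)\<^sup>2 + (Im y)\<^sup>2 \<le> (Re y - real n / 2)\<^sup>2 + (Im y)\<^sup>2"
    by (simp add: cmod_power2)
  hence "real n * Re y \<le> (real n)\<^sup>2 / 4"
    by (simp add: power2_eq_square algebra_simps)
  moreover have "real n * Re y = (real n)\<^sup>2 * Re x / 2"
    by (simp add: y_def power2_eq_square)
  moreover have "(real n)\<^sup>2 * Re x > (real n)\<^sup>2 * (1/2)"
    using n x by (intro mult_strict_left_mono) auto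
  ultimately show False by linarith
qed

text \<open>A Grace-Walsh-Szego argument: starting from the diagonal, which has no zeros in
  \<open>Re x > 1/2\<close>, the arguments \<open>u i\<close> are substituted one at a time, each substitution being
  a polar derivative.\<close>
lemma B_symbol_nonzero:
  assumes adm: "B_admissible n l0 l1 l2" and n: "n \<ge> 1"
    and u: "\<And>i. i < n \<Longrightarrow> Re (u i) > 1/2"
  shows "l0 + l1 * (of_nat n / 2) * (\<Sum>i<n. u i) + l2 * (of_nat n ^ 2 / 4) * esym2 u n \<noteq> 0"
proof -
  define a where "a k = l0 + l1 * (of_nat n / 2) * (\<Sum>i<k. u i) + l2 * (of_nat n ^ 2 / 4) * esym2 u k" for k
  define b where "b k = l1 * (of_nat n / 2) + l2 * (of_nat n ^ 2 / 4) * (\<Sum>i<k. u i)" for k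
  define c where "c = l2 * (of_nat n ^ 2 / 4)"
  have "Re x > 1/2 \<Longrightarrow> sym_quad (a k) (b k) c (n - k) x \<noteq> 0" if "k \<le> n" for k x
    using that
  proof (induction k arbitrary: x)
    case 0
    then show ?case
      using admissible_sym_quad_nonzero[OF adm n] by (simp add: a_def b_def c_def)
  next
    case (Suc k)
    have IH: "\<And>y. Re y > 1/2 \<Longrightarrow> sym_quad (a k) (b k) c (n - k) y \<noteq> 0"
      using Suc by simp
    have "sym_quad (a k + b k * u k) (b k + c * u k) c (n - k - 1) x \<noteq> 0"
      by (rule sym_quad_polar_nonzero[OF _ _ _ IH]) (use Suc.prems u[of k] in simp_all)
    moreover have "a (Suc k) = a k + b k * u k" "b (Suc k) = b k + c * u k"
      by (simp_all add: a_def b_def c_def field_simps)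
    ultimately show ?case by simp
  qed
  from this[of n 1] show ?thesis by (simp add: a_def sym_quad_def)
qed

lemma poly_prod_linear_derivs:
  fixes w :: "nat \<Rightarrow> complex" and z :: complex
  defines "u \<equiv> \<lambda>i. z / (z - w i)" and "p \<equiv> \<lambda>k. \<Prod>i<k. [:- w i, 1:]"
  assumes "\<And>i. i < k \<Longrightarrow> z \<noteq> w i"
  shows "poly (p k) z = (\<Prod>i<k. z - w i)
    \<and> z * poly (pderiv (p k)) z = (\<Prod>i<k. z - w i) * (\<Sum>i<k. u i)
    \<and> z\<^sup>2 * poly (pderiv (pderiv (p k))) z = 2 * (\<Prod>i<k. z - w i) * esym2 u k"
  using assms(3)
proof (induction k)
  case 0
  show ?case by (simp add: p_def)
next
  case (Suc k)
  define A where "A = (\<Prod>i<k. z - w i)"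
  define s where "s = (\<Sum>i<k. u i)"
  have IH: "poly (p k) z = A" "z * poly (pderiv (p k)) z = A * s"
    "z\<^sup>2 * poly (pderiv (pderiv (p k))) z = 2 * A * esym2 u k"
    using Suc by (simp_all add: A_def s_def)
  have z: "z = u k * (z - w k)" using Suc.prems by (simp add: u_def)
  have p: "p (Suc k) = p k * [:- w k, 1:]" by (simp add: p_def)
  have lin: "pderiv [:- w k, 1:] = 1" by (simp add: pderiv_pCons)
  have d1: "pderiv (p (Suc k)) = p k + [:- w k, 1:] * pderiv (p k)"
    by (simp only: p pderiv_mult lin mult_1_right)
  have d2: "pderiv (pderiv (p (Suc k))) = 2 * pderiv (p k) + [:- w k, 1:] * pderiv (pderiv (p k))"
    unfolding d1 pderiv_add pderiv_mult lin mult_1_right mult_2 by (simp only: add_ac)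
  have "z * poly (pderiv (p (Suc k))) z = z * A + (z - w k) * (z * poly (pderiv (p k)) z)"
    by (simp add: d1 IH algebra_simps)
  also have "\<dots> = (z - w k) * (A * (s + u k))"
    by (subst (1) z) (simp add: IH algebra_simps)
  finally have 1: "z * poly (pderiv (p (Suc k))) z = (z - w k) * (A * (s + u k))" .
  have "z\<^sup>2 * poly (pderiv (pderiv (p (Suc k)))) z
      = 2 * z * (z * poly (pderiv (p k)) z) + (z - w k) * (z\<^sup>2 * poly (pderiv (pderiv (p k))) z)"
    by (simp add: d2 algebra_simps power2_eq_square)
  also have "\<dots> = (z - w k) * (2 * A * (esym2 u k + u k * s))"
    by (subst (1) z) (simp add: IH algebra_simps)
  finally have 2: "z\<^sup>2 * poly (pderiv (pderiv (p (Suc k)))) z = (z - w k) * (2 * A * (esym2 u k + u k * s))" .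
  show ?case
    using 1 2 by (simp add: p IH A_def s_def algebra_simps)
qed

lemma B_op_smult_prod_linear:
  fixes w :: "nat \<Rightarrow> complex" and z c :: complex
  assumes "\<And>i. i < k \<Longrightarrow> z \<noteq> w i"
  shows "B_op n l0 l1 l2 (smult c (\<Prod>i<k. [:- w i, 1:])) z = c * (\<Prod>i<k. z - w i) *
    (l0 + l1 * (of_nat n / 2) * (\<Sum>i<k. z / (z - w i))
      + l2 * (of_nat n ^ 2 / 4) * esym2 (\<lambda>i. z / (z - w i)) k)"
proof -
  define p where "p = (\<Prod>i<k. [:- w i, 1:])"
  have "B_op n l0 l1 l2 (smult c p) z =
     c * (l0 * poly p z + l1 * (of_nat n / 2) * (z * poly (pderiv p) z)
      + l2 * (of_nat n ^ 2 / 4) * (z\<^sup>2 * poly (pderiv (pderiv p)) z) / 2)"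
    by (simp add: B_op_def pderiv_smult power2_eq_square field_simps)
  thus ?thesis
    using poly_prod_linear_derivs[of k z w, OF assms] by (simp add: p_def field_simps)
qed

lemma Re_div_diff_gt_half:
  fixes z w :: complex
  assumes "cmod w < cmod z"
  shows "Re (z / (z - w)) > 1/2"
proof -
  have "z - w \<noteq> 0" using assms by auto
  hence D: "(Re z - Re w)\<^sup>2 + (Im z - Im w)\<^sup>2 > 0"
    by (metis complex_eq_iff diff_self minus_complex.sel sum_power2_gt_zero_iff)
  have "(cmod w)\<^sup>2 < (cmod z)\<^sup>2" using assms by (simp add: power_strict_mono)
  hence "(Re w)\<^sup>2 + (Im w)\<^sup>2 < (Re z)\<^sup>2 + (Im z)\<^sup>2" by (simp add: cmod_power2)
  hence "(Re z * (Re z - Re w) + Im z * (Im z - Im w)) * 2 > (Re z - Re w)\<^sup>2 + (Im z - Im w)\<^sup>2"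
    by (simp add: power2_eq_square algebra_simps)
  thus ?thesis using D by (simp add: Re_divide power2_eq_square field_simps)
qed

lemma complex_poly_factor_roots:
  fixes F :: "complex poly"
  obtains w where "F = smult (lead_coeff F) (\<Prod>i<degree F. [:- w i, 1:])"
    and "\<And>i. i < degree F \<Longrightarrow> poly F (w i) = 0"
proof -
  obtain w where w: "smult (lead_coeff F) (\<Prod>i<degree F. [:- w i, 1:]) = F"
    using complex_poly_decompose' by blast
  moreover have "poly F (w i) = 0" if "i < degree F" for i
    using that by (subst w[symmetric]) (auto simp: poly_prod)
  ultimately show ?thesis using that by metis
qed

lemma B_op_nonzero:
  fixes G :: "complex poly"
  assumes adm: "B_admissible n l0 l1 l2" and n: "n \<ge> 1" and G: "degree G = n"
    and roots: "\<And>x. poly G x = 0 \<Longrightarrow> cmod x < 1" and z: "cmod z \<ge> 1"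
  shows "B_op n l0 l1 l2 G z \<noteq> 0"
proof -
  obtain w where w: "G = smult (lead_coeff G) (\<Prod>i<n. [:- w i, 1:])"
    and wroot: "\<And>i. i < n \<Longrightarrow> poly G (w i) = 0"
    using complex_poly_factor_roots[of G] G by metis
  have wz: "cmod (w i) < cmod z" if "i < n" for i using roots[OF wroot[OF that]] z by simp
  hence "z \<noteq> w i" if "i < n" for i using that by auto
  hence "B_op n l0 l1 l2 G z = lead_coeff G * (\<Prod>i<n. z - w i) *
      (l0 + l1 * (of_nat n / 2) * (\<Sum>i<n. z / (z - w i))
        + l2 * (of_nat n ^ 2 / 4) * esym2 (\<lambda>i. z / (z - w i)) n)"
    by (subst w) (rule B_op_smult_prod_linear)
  moreover have "lead_coeff G \<noteq> 0" using G n by auto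
  moreover have "(\<Prod>i<n. z - w i) \<noteq> 0" using \<open>\<And>i. i < n \<Longrightarrow> z \<noteq> w i\<close> by simp
  ultimately show ?thesis
    using B_symbol_nonzero[OF adm n] Re_div_diff_gt_half[OF wz] by simp
qed

lemma B_op_diff: "B_op n l0 l1 l2 (p - q) z = B_op n l0 l1 l2 p z - B_op n l0 l1 l2 q z"
  by (simp add: B_op_def pderiv_diff algebra_simps diff_divide_distrib)

lemma B_op_smult: "B_op n l0 l1 l2 (smult c p) z = c * B_op n l0 l1 l2 p z"
  by (simp add: B_op_def pderiv_smult algebra_simps)

lemma esym2_const: "esym2 (\<lambda>_. x) k = of_nat k * (of_nat k - 1) / 2 * x\<^sup>2"
  by (induction k) (simp_all add: field_simps power2_eq_square)

lemma B_op_monom: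
  assumes "n \<ge> 1" "z \<noteq> 0"
  shows "B_op n l0 l1 l2 (monom 1 n) z = poly (U_poly n l0 l1 l2) (of_nat n / 2) * z ^ n"
proof -
  have "B_op n l0 l1 l2 (monom 1 n) z = z ^ n * sym_quad l0 (l1 * of_nat n / 2) (l2 * of_nat n ^ 2 / 4) n 1"
    using B_op_smult_prod_linear[of n z "\<lambda>_. 0" n l0 l1 l2 1] assms
    by (simp add: monom_altdef esym2_const sym_quad_def field_simps)
  thus ?thesis using poly_U_poly_eq_sym_quad[OF assms(1), of l0 l1 l2 1] by simp
qed

lemma poly_U_poly_half_nonzero:
  assumes "B_admissible n l0 l1 l2" "n \<ge> 1"
  shows "poly (U_poly n l0 l1 l2) (of_nat n / 2) \<noteq> 0"
  using assms unfolding B_admissible_def by force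

lemma pcompose_monom_scale:
  "monom (a::'a::{idom,ring_char_0}) n \<circ>\<^sub>p [:0, b:] = smult (b ^ n) (monom a n)"
  by (rule poly_eq_poly_eq_iff[THEN iffD1])
     (simp add: fun_eq_iff poly_pcompose poly_monom power_mult_distrib)

lemma norm_scaled_diff_less:
  fixes x w :: complex and R r k :: real
  assumes "cmod w < k" "k \<le> r" "r < R" "cmod x \<ge> 1"
  shows "cmod (of_real r * x - w) < cmod (of_real R * x - w)"
proof -
  have "k > 0" using assms(1) norm_ge_zero[of w] by linarith
  have "Re (x * cnj w) \<le> cmod x * cmod w"
    using complex_Re_le_cmod[of "x * cnj w"] by (simp add: norm_mult)
  also have "\<dots> < cmod x * k" using assms by (intro mult_strict_left_mono) auto
  also have "\<dots> \<le> cmod x * cmod x * k"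
    using assms \<open>k > 0\<close> mult_right_mono[of 1 "cmod x" "cmod x * k"] by (simp add: mult_ac)
  finally have "Re (x * cnj w) < k * (cmod x)\<^sup>2" by (simp add: power2_eq_square mult_ac)
  moreover have "2 * k * (cmod x)\<^sup>2 \<le> (R + r) * (cmod x)\<^sup>2"
    using assms by (intro mult_right_mono) auto
  ultimately have re: "2 * Re (x * cnj w) < (R + r) * (cmod x)\<^sup>2" by linarith
  have sq: "(cmod (of_real s * x - w))\<^sup>2 = s\<^sup>2 * (cmod x)\<^sup>2 - 2 * s * Re (x * cnj w) + (cmod w)\<^sup>2"
    for s
    unfolding cmod_power2 by (simp add: power2_eq_square algebra_simps)
  have "(cmod (of_real R * x - w))\<^sup>2 - (cmod (of_real r * x - w))\<^sup>2
      = (R - r) * ((R + r) * (cmod x)\<^sup>2 - 2 * Re (x * cnj w))"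
    unfolding sq by (simp add: power2_eq_square algebra_simps)
  also have "\<dots> > 0" using assms re by simp
  finally show ?thesis by (simp add: power_less_imp_less_base)
qed

lemma norm_poly_dilate_less:
  fixes F :: "complex poly" and R r k :: real
  assumes "degree F \<ge> 1" and roots: "\<And>x. poly F x = 0 \<Longrightarrow> cmod x < k"
    and "k \<le> r" "r < R" "cmod x \<ge> 1"
  shows "cmod (poly F (of_real r * x)) < cmod (poly F (of_real R * x))"
proof -
  obtain w where w: "F = smult (lead_coeff F) (\<Prod>i<degree F. [:- w i, 1:])"
    and wroot: "\<And>i. i < degree F \<Longrightarrow> poly F (w i) = 0"
    using complex_poly_factor_roots[of F] by blast
  have lt: "cmod (of_real r * x - w i) < cmod (of_real R * x - w i)" if "i < degree F" for i
    using norm_scaled_diff_less[OF roots[OF wroot[OF that]]] assms by simp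
  have "(\<Prod>i<degree F. cmod (of_real r * x - w i)) < (\<Prod>i<degree F. cmod (of_real R * x - w i))"
    using assms lt le_less_trans[OF norm_ge_zero lt]
    by (intro prod_mono_strict[of 0]) (auto intro: less_imp_le)
  moreover have "lead_coeff F \<noteq> 0" using assms by auto
  ultimately show ?thesis
    by (subst (1 2) w) (simp add: poly_prod norm_mult prod_norm)
qed

lemma of_real_pow_diff_nonzero:
  fixes \<alpha> :: complex
  assumes "cmod \<alpha> \<le> 1" "0 \<le> r" "r < R" "n \<ge> 1"
  shows "of_real (R ^ n) - \<alpha> * of_real (r ^ n) \<noteq> 0"
proof
  assume "of_real (R ^ n) - \<alpha> * of_real (r ^ n) = 0"
  hence "R ^ n = cmod \<alpha> * r ^ n"
    using assms by (metis eq_iff_diff_eq_0 abs_of_nonneg norm_mult norm_of_real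
        zero_le_power order.trans order.strict_implies_order)
  also have "\<dots> \<le> r ^ n" using assms by (simp add: mult_left_le_one_le)
  also have "\<dots> < R ^ n" using assms by (intro power_strict_mono) auto
  finally show False by simp
qed

lemma B_op_dilate_diff_nonzero:
  fixes F :: "complex poly"
  assumes adm: "B_admissible n l0 l1 l2" and n: "n \<ge> 1" and F: "degree F = n"
    and roots: "\<And>x. poly F x = 0 \<Longrightarrow> cmod x < k"
    and \<alpha>: "cmod \<alpha> \<le> 1" and rR: "k \<le> r" "r < R" and z: "cmod z \<ge> 1"
  shows "B_op n l0 l1 l2 (F \<circ>\<^sub>p [:0, of_real R:]) z
    - \<alpha> * B_op n l0 l1 l2 (F \<circ>\<^sub>p [:0, of_real r:]) z \<noteq> 0"
proof -
  define G where "G = F \<circ>\<^sub>p [:0, of_real R:] - smult \<alpha> (F \<circ>\<^sub>p [:0, of_real r:])"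
  obtain x0 where "poly F x0 = 0"
    using fundamental_theorem_of_algebra[of F] F n by (auto simp: constant_degree)
  hence "k > 0" using roots norm_ge_zero le_less_trans by blast
  have "degree G = n"
  proof (rule antisym)
    show "degree G \<le> n" unfolding G_def
      by (intro degree_diff_le order.trans[OF degree_smult_le]) (auto simp: degree_pcompose F)
    have "coeff G n = (of_real (R ^ n) - \<alpha> * of_real (r ^ n)) * coeff F n"
      by (simp add: G_def coeff_pcompose_linear algebra_simps)
    also have "\<dots> \<noteq> 0" using of_real_pow_diff_nonzero[OF \<alpha> _ rR(2) n] F n \<open>k > 0\<close> rR by auto
    finally show "n \<le> degree G" by (rule le_degree)
  qed
  moreover have "cmod x < 1" if "poly G x = 0" for x
  proof (rule ccontr)
    assume "\<not> cmod x < 1"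
    have "cmod (\<alpha> * poly F (of_real r * x)) \<le> cmod (poly F (of_real r * x))"
      using \<alpha> by (simp add: norm_mult mult_left_le_one_le)
    also have "\<dots> < cmod (poly F (of_real R * x))"
      using \<open>\<not> cmod x < 1\<close> F n by (intro norm_poly_dilate_less[OF _ roots rR]) auto
    finally have "cmod (\<alpha> * poly F (of_real r * x)) < cmod (poly F (of_real R * x))" .
    with that show False by (simp add: G_def poly_pcompose mult.commute)
  qed
  ultimately have "B_op n l0 l1 l2 G z \<noteq> 0" by (rule B_op_nonzero[OF adm n _ _ z])
  thus ?thesis by (simp add: G_def B_op_diff B_op_smult)
qed

lemma norm_B_op_dilate_diff_le:
  fixes P :: "complex poly"
  assumes adm: "B_admissible n l0 l1 l2" and n: "n \<ge> 1" and k: "k > 0" and P: "degree P \<le> n"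
    and \<alpha>: "cmod \<alpha> \<le> 1" and rR: "k \<le> r" "r < R" and z: "cmod z \<ge> 1"
  shows "cmod (B_op n l0 l1 l2 (P \<circ>\<^sub>p [:0, of_real R:]) z
      - \<alpha> * B_op n l0 l1 l2 (P \<circ>\<^sub>p [:0, of_real r:]) z)
    \<le> cmod (of_real (R ^ n) - \<alpha> * of_real (r ^ n)) / k ^ n
      * cmod (B_op n l0 l1 l2 (monom 1 n) z) * max_circle P k"
    (is "cmod ?T \<le> cmod ?c / k ^ n * cmod ?B * ?M")
proof (rule ccontr)
  have "?c \<noteq> 0" using of_real_pow_diff_nonzero[OF \<alpha> _ rR(2) n] k rR by simp
  moreover have "z \<noteq> 0" using z by auto
  hence "?B \<noteq> 0" using B_op_monom[OF n] poly_U_poly_half_nonzero[OF adm n] by simp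
  ultimately have cB: "?c * ?B \<noteq> 0" by simp
  define \<mu> where "\<mu> = ?T / (?c * ?B)"
  assume "\<not> cmod ?T \<le> cmod ?c / k ^ n * cmod ?B * ?M"
  hence "?M / k ^ n * cmod (?c * ?B) < cmod ?T" by (simp add: norm_mult mult_ac)
  moreover have "cmod (?c * ?B) > 0" using cB by simp
  ultimately have \<mu>_gt: "cmod \<mu> > ?M / k ^ n"
    by (simp add: \<mu>_def norm_divide pos_less_divide_eq del: norm_mult)
  define F where "F = P - smult \<mu> (monom 1 n)"
  have F: "degree F = n" and roots: "\<And>x. poly F x = 0 \<Longrightarrow> cmod x < k"
    using degree_diff_large_monom[OF P k \<mu>_gt] zeros_diff_large_monom[OF P k \<mu>_gt]
    by (simp_all add: F_def)
  have "?T - \<mu> * (?c * ?B) =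
    B_op n l0 l1 l2 (F \<circ>\<^sub>p [:0, of_real R:]) z - \<alpha> * B_op n l0 l1 l2 (F \<circ>\<^sub>p [:0, of_real r:]) z"
    by (simp add: F_def pcompose_diff pcompose_smult pcompose_monom_scale B_op_diff B_op_smult
        algebra_simps)
  also have "\<dots> \<noteq> 0" by (rule B_op_dilate_diff_nonzero[OF adm n F roots \<alpha> rR z])
  finally show False using cB by (simp add: \<mu>_def)
qed

lemma norm_B_op_dilate_diff_monom:
  assumes "k > 0"
  shows "cmod (B_op n l0 l1 l2 (monom a n \<circ>\<^sub>p [:0, of_real R:]) z
      - \<alpha> * B_op n l0 l1 l2 (monom a n \<circ>\<^sub>p [:0, of_real r:]) z)
    = cmod (of_real (R ^ n) - \<alpha> * of_real (r ^ n)) / k ^ n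
      * cmod (B_op n l0 l1 l2 (monom 1 n) z) * max_circle (monom a n) k"
proof -
  have "monom a n \<circ>\<^sub>p [:0, of_real s:] = smult (of_real (s ^ n) * a) (monom 1 n)" for s :: real
    by (simp add: pcompose_monom_scale smult_monom)
  thus ?thesis
    using assms by (simp add: B_op_smult max_circle_monom norm_mult algebra_simps flip: norm_mult)
qed

theorem corollary2p5:
  fixes n :: nat and k :: real and P :: "complex poly" and l0 l1 l2 :: complex
  assumes "n \<ge> 1" and "k > 0" and "degree P \<le> n"
    and "B_admissible n l0 l1 l2"
  shows "(\<forall>\<alpha> R r z. cmod \<alpha> \<le> 1 \<and> R > r \<and> r \<ge> k \<and> cmod z \<ge> 1 \<longrightarrow>
            cmod (B_op n l0 l1 l2 (P \<circ>\<^sub>p [:0, of_real R:]) z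
                  - \<alpha> * B_op n l0 l1 l2 (P \<circ>\<^sub>p [:0, of_real r:]) z)
            \<le> cmod (of_real (R ^ n) - \<alpha> * of_real (r ^ n)) / k ^ n
               * cmod (B_op n l0 l1 l2 (monom 1 n) z) * max_circle P k)
       \<and> (\<forall>a \<alpha> R r z. a \<noteq> 0 \<and> cmod \<alpha> \<le> 1 \<and> R > r \<and> r \<ge> k \<and> cmod z \<ge> 1 \<longrightarrow>
            cmod (B_op n l0 l1 l2 (monom a n \<circ>\<^sub>p [:0, of_real R:]) z
                  - \<alpha> * B_op n l0 l1 l2 (monom a n \<circ>\<^sub>p [:0, of_real r:]) z)
            = cmod (of_real (R ^ n) - \<alpha> * of_real (r ^ n)) / k ^ n
               * cmod (B_op n l0 l1 l2 (monom 1 n) z) * max_circle (monom a n) k)"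
  using norm_B_op_dilate_diff_le[OF assms(4,1,2,3)] norm_B_op_dilate_diff_monom[OF assms(2)]
  by blast

end
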